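(* Let $(x,b)$ be a \textsc{Set Radius Strip Cover} instance with $n$ sensors and optimal lifetime $T$. Add two dummy sensors: sensor $0$ with $x_0=0$, $b_0=0$, and sensor $n+1$ with $x_{n+1}=1$, $b_{n+1}=0$. Then there exist $i,k\in\{0,\ldots,n+1\}$ with $i<k$ and $x_i<x_k$ such that $T=\frac{b_k+b_i}{x_k-x_i}$.
   Context: \textsc{Set Radius Strip Cover}: An instance is a pair $(x,b)$, where $x=(x_1,\ldots,x_n)\in[0,1]^n$ with $x_1\le\cdots\le x_n$ are sensor locations and $b=(b_1,\ldots,b_n)$, $b_i\ge0$ rational, are battery charges. A solution is a radial assignment $\rho\in[0,\infty)^n$; all sensors are activated at time $0$. Sensor $i$ with $\rho_i>0$ covers $[x_i-\rho_i,x_i+\rho_i]$ during $[0,b_i/\rho_i]$; a sensor with $\rho_i=0$ is inactive and covers nothing. The lifetime of $\rho$ is the maximum $T$ such that for every $t\in[0,T]$, $[0,1]\subseteq\bigcup_{i:\rho_i>0,\ b_i/\rho_i\ge t}[x_i-\rho_i,x_i+\rho_i]$; the optimal lifetime is the maximum lifetime over all radial assignments. *)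

theory Defs
  imports Complex_Main
begin

definition srsc_instance :: "nat \<Rightarrow> (nat \<Rightarrow> real) \<Rightarrow> (nat \<Rightarrow> real) \<Rightarrow> bool" where
  "srsc_instance n x b \<longleftrightarrow>
     (\<forall>i\<in>{1..n}. 0 \<le> x i \<and> x i \<le> 1 \<and> 0 \<le> b i \<and> b i \<in> \<rat>) \<and>
     (\<forall>i\<in>{1..n}. \<forall>j\<in>{1..n}. i \<le> j \<longrightarrow> x i \<le> x j)"

definition radial_assignment :: "nat \<Rightarrow> (nat \<Rightarrow> real) \<Rightarrow> bool" where
  "radial_assignment n \<rho> \<longleftrightarrow> (\<forall>i\<in>{1..n}. 0 \<le> \<rho> i)"

definition covered_at :: "nat \<Rightarrow> (nat \<Rightarrow> real) \<Rightarrow> (nat \<Rightarrow> real) \<Rightarrow> (nat \<Rightarrow> real) \<Rightarrow> real \<Rightarrow> bool" where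
  "covered_at n x b \<rho> t \<longleftrightarrow>
     {0..1} \<subseteq> (\<Union>i\<in>{i\<in>{1..n}. 0 < \<rho> i \<and> t \<le> b i / \<rho> i}. {x i - \<rho> i .. x i + \<rho> i})"

definition survives :: "nat \<Rightarrow> (nat \<Rightarrow> real) \<Rightarrow> (nat \<Rightarrow> real) \<Rightarrow> (nat \<Rightarrow> real) \<Rightarrow> real \<Rightarrow> bool" where
  "survives n x b \<rho> T \<longleftrightarrow> (\<forall>t\<in>{0..T}. covered_at n x b \<rho> t)"

definition is_lifetime :: "nat \<Rightarrow> (nat \<Rightarrow> real) \<Rightarrow> (nat \<Rightarrow> real) \<Rightarrow> (nat \<Rightarrow> real) \<Rightarrow> real \<Rightarrow> bool" where
  "is_lifetime n x b \<rho> L \<longleftrightarrow> survives n x b \<rho> L \<and> (\<forall>T. survives n x b \<rho> T \<longrightarrow> T \<le> L)"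

definition is_optimal_lifetime :: "nat \<Rightarrow> (nat \<Rightarrow> real) \<Rightarrow> (nat \<Rightarrow> real) \<Rightarrow> real \<Rightarrow> bool" where
  "is_optimal_lifetime n x b T \<longleftrightarrow>
     (\<exists>\<rho>. radial_assignment n \<rho> \<and> is_lifetime n x b \<rho> T) \<and>
     (\<forall>\<rho> L. radial_assignment n \<rho> \<and> is_lifetime n x b \<rho> L \<longrightarrow> L \<le> T)"

definition ext_loc :: "nat \<Rightarrow> (nat \<Rightarrow> real) \<Rightarrow> nat \<Rightarrow> real" where
  "ext_loc n x i = (if i = 0 then 0 else if i = n + 1 then 1 else x i)"

definition ext_bat :: "nat \<Rightarrow> (nat \<Rightarrow> real) \<Rightarrow> nat \<Rightarrow> real" where
  "ext_bat n b i = (if i = 0 then 0 else if i = n + 1 then 0 else b i)"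

end

theory Submission
  imports Defs "HOL-Analysis.Analysis"
begin

text \<open>If \<open>T > 0\<close>, let \<open>A\<close> be the sensors still alive at time \<open>T\<close>; their
  intervals of radius \<open>b\<^sub>i / T \<ge> \<rho>\<^sub>i\<close> cover \<open>[0, 1]\<close>. If no pair of
  (extended) sensors satisfies \<open>T = (b\<^sub>k + b\<^sub>i) / (x\<^sub>k - x\<^sub>i)\<close>, none of these
  intervals ends at \<open>0\<close> or \<open>1\<close> and no right end meets a left end, so the open
  intervals already cover \<open>[0, 1]\<close>, with a uniform margin by compactness. Then radii
  \<open>b\<^sub>i / L\<close> for some \<open>L > T\<close> still cover, and with them every sensor of \<open>A\<close>
  lives exactly until \<open>L\<close>, contradicting optimality. For \<open>T = 0\<close> the two dummy
  sensors form the required pair.\<close>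

lemma closed_interval_cover_right:
  fixes A :: "'i set" and c r :: "'i \<Rightarrow> real"
  assumes "finite A"
    and cover: "\<forall>q\<in>{a..b}. \<exists>i\<in>A. \<bar>q - c i\<bar> \<le> r i"
    and p: "p \<in> {a..<b}"
  shows "\<exists>k\<in>A. c k - r k \<le> p \<and> p < c k + r k"
proof -
  define m where "m = Min (insert b {c k - r k | k. k \<in> A \<and> p < c k - r k})"
  have fin: "finite {c k - r k | k. k \<in> A \<and> p < c k - r k}"
    using \<open>finite A\<close> by simp
  have "m \<le> b" "p < m"
    using fin p unfolding m_def by auto
  with p have "(p + m) / 2 \<in> {a..b}" by auto
  then obtain k where k: "k \<in> A" "\<bar>(p + m) / 2 - c k\<bar> \<le> r k"
    using cover by blast
  have "c k - r k \<le> p"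
  proof (rule ccontr)
    assume "\<not> c k - r k \<le> p"
    then have "m \<le> c k - r k"
      using fin k(1) unfolding m_def by (intro Min_le) auto
    with k(2) \<open>p < m\<close> show False by (auto simp: abs_le_iff field_simps)
  qed
  moreover have "p < c k + r k"
    using k(2) \<open>p < m\<close> by (auto simp: abs_le_iff field_simps)
  ultimately show ?thesis using k(1) by blast
qed

lemma closed_interval_cover_left:
  fixes A :: "'i set" and c r :: "'i \<Rightarrow> real"
  assumes "finite A"
    and cover: "\<forall>q\<in>{a..b}. \<exists>i\<in>A. \<bar>q - c i\<bar> \<le> r i"
    and p: "p \<in> {a<..b}"
  shows "\<exists>k\<in>A. c k - r k < p \<and> p \<le> c k + r k"
proof -
  have "\<forall>q\<in>{-b..-a}. \<exists>i\<in>A. \<bar>q - (- c i)\<bar> \<le> r i"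
  proof
    fix q assume "q \<in> {-b..-a}"
    then obtain i where "i \<in> A" "\<bar>- q - c i\<bar> \<le> r i" using cover by force
    then show "\<exists>i\<in>A. \<bar>q - (- c i)\<bar> \<le> r i" by (intro bexI[of _ i]) (auto simp: abs_le_iff)
  qed
  from closed_interval_cover_right[OF \<open>finite A\<close> this, of "- p"] p
  obtain k where "k \<in> A" "- c k - r k \<le> - p" "- p < - c k + r k" by auto
  then show ?thesis by (intro bexI[of _ k]) auto
qed

lemma closed_interval_cover_interior:
  fixes A :: "'i set" and c r :: "'i \<Rightarrow> real"
  assumes "finite A"
    and cover: "\<forall>q\<in>{a..b}. \<exists>i\<in>A. \<bar>q - c i\<bar> \<le> r i"
    and right_not_b: "\<forall>i\<in>A. c i + r i \<noteq> b"
    and left_not_a: "\<forall>i\<in>A. c i - r i \<noteq> a"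
    and no_touching: "\<forall>i\<in>A. \<forall>k\<in>A. c i + r i \<noteq> c k - r k"
    and p: "p \<in> {a..b}"
  shows "\<exists>i\<in>A. \<bar>p - c i\<bar> < r i"
proof -
  obtain i where i: "i \<in> A" "\<bar>p - c i\<bar> \<le> r i" using cover p by blast
  consider "\<bar>p - c i\<bar> < r i" | "p = c i + r i" | "p = c i - r i"
    using i(2) by (auto simp: abs_le_iff abs_less_iff, linarith)
  then show ?thesis
  proof cases
    case 1
    with i(1) show ?thesis by blast
  next
    case 2
    with p i(1) right_not_b have "p \<in> {a..<b}" by auto
    then obtain k where "k \<in> A" "c k - r k \<le> p" "p < c k + r k"
      using closed_interval_cover_right[OF \<open>finite A\<close> cover] by blast
    moreover have "c k - r k \<noteq> p" using no_touching i(1) \<open>k \<in> A\<close> 2 by metis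
    ultimately show ?thesis by (intro bexI[of _ k]) (auto simp: abs_less_iff)
  next
    case 3
    with p i(1) left_not_a have "p \<in> {a<..b}" by auto
    then obtain k where "k \<in> A" "c k - r k < p" "p \<le> c k + r k"
      using closed_interval_cover_left[OF \<open>finite A\<close> cover] by blast
    moreover have "c k + r k \<noteq> p" using no_touching i(1) \<open>k \<in> A\<close> 3 by metis
    ultimately show ?thesis by (intro bexI[of _ k]) (auto simp: abs_less_iff)
  qed
qed

lemma open_interval_cover_margin:
  fixes A :: "'i set" and c r :: "'i \<Rightarrow> real"
  assumes "compact S"
    and cover: "\<forall>p\<in>S. \<exists>i\<in>A. \<bar>p - c i\<bar> < r i"
  shows "\<exists>e>0. \<forall>p\<in>S. \<exists>i\<in>A. \<bar>p - c i\<bar> \<le> r i - e"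
proof -
  have "S \<subseteq> \<Union>((\<lambda>i. ball (c i) (r i)) ` A)"
    using cover by (force simp: dist_real_def)
  then obtain \<epsilon> where "0 < \<epsilon>"
    and lebesgue: "\<And>p. p \<in> S \<Longrightarrow> \<exists>G \<in> (\<lambda>i. ball (c i) (r i)) ` A. ball p \<epsilon> \<subseteq> G"
    using Heine_Borel_lemma[OF \<open>compact S\<close>] by blast
  have "\<exists>i\<in>A. \<bar>p - c i\<bar> \<le> r i - \<epsilon> / 2" if "p \<in> S" for p
  proof -
    obtain i where "i \<in> A" and sub: "ball p \<epsilon> \<subseteq> ball (c i) (r i)"
      using lebesgue \<open>p \<in> S\<close> by blast
    \<comment> \<open>test the inclusion at the point of \<open>ball p \<epsilon>\<close> on the far side of \<open>p\<close> from \<open>c i\<close>\<close>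
    define q where "q = (if c i \<le> p then p + \<epsilon> / 2 else p - \<epsilon> / 2)"
    have "q \<in> ball p \<epsilon>"
      using \<open>0 < \<epsilon>\<close> by (simp add: q_def dist_real_def)
    with sub have "q \<in> ball (c i) (r i)" by blast
    then have "\<bar>p - c i\<bar> \<le> r i - \<epsilon> / 2"
      by (auto simp: q_def dist_real_def split: if_splits)
    with \<open>i \<in> A\<close> show ?thesis by blast
  qed
  with \<open>0 < \<epsilon>\<close> show ?thesis by (intro exI[of _ "\<epsilon> / 2"]) auto
qed

lemma covered_at_iff:
  "covered_at n x b \<rho> t \<longleftrightarrow>
     (\<forall>p\<in>{0..1}. \<exists>i\<in>{1..n}. 0 < \<rho> i \<and> t \<le> b i / \<rho> i \<and> \<bar>p - x i\<bar> \<le> \<rho> i)"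
  unfolding covered_at_def subset_iff UN_iff Ball_def Bex_def mem_Collect_eq atLeastAtMost_iff
    abs_diff_le_iff by blast

lemma is_lifetime_nonneg:
  assumes "is_lifetime n x b \<rho> L"
  shows "0 \<le> L"
proof (rule ccontr)
  assume "\<not> 0 \<le> L"
  then have "survives n x b \<rho> (L / 2)" by (simp add: survives_def)
  with assms have "L / 2 \<le> L" unfolding is_lifetime_def by blast
  with \<open>\<not> 0 \<le> L\<close> show False by simp
qed

lemma is_lifetime_covered_with_battery_radii:
  assumes "is_lifetime n x b \<rho> T" and "0 < T"
  obtains A where "A \<subseteq> {1..n}" and "\<forall>i\<in>A. 0 < b i"
    and "\<forall>p\<in>{0..1}. \<exists>i\<in>A. \<bar>p - x i\<bar> \<le> b i / T"
proof
  define A where "A = {i\<in>{1..n}. 0 < \<rho> i \<and> T \<le> b i / \<rho> i}"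
  show "A \<subseteq> {1..n}" by (auto simp: A_def)
  have battery: "T * \<rho> i \<le> b i" "0 < \<rho> i" if "i \<in> A" for i
    using that by (auto simp: A_def le_divide_eq mult.commute)
  with \<open>0 < T\<close> show "\<forall>i\<in>A. 0 < b i"
    by (meson less_le_trans mult_pos_pos)
  have covered: "covered_at n x b \<rho> T"
    using assms is_lifetime_nonneg[OF assms(1)] by (simp add: is_lifetime_def survives_def)
  show "\<forall>p\<in>{0..1}. \<exists>i\<in>A. \<bar>p - x i\<bar> \<le> b i / T"
  proof
    fix p :: real assume "p \<in> {0..1}"
    with covered obtain i where "i \<in> A" "\<bar>p - x i\<bar> \<le> \<rho> i"
      unfolding covered_at_iff A_def by blast
    moreover have "\<rho> i \<le> b i / T"
      using battery[OF \<open>i \<in> A\<close>] \<open>0 < T\<close> by (simp add: pos_le_divide_eq mult.commute)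
    ultimately show "\<exists>i\<in>A. \<bar>p - x i\<bar> \<le> b i / T" by force
  qed
qed

lemma uniform_assignment_is_lifetime:
  assumes "A \<subseteq> {1..n}" and "\<forall>i\<in>A. 0 < b i" and "0 < L"
    and cover: "\<forall>p\<in>{0..1}. \<exists>i\<in>A. \<bar>p - x i\<bar> \<le> b i / L"
  shows "is_lifetime n x b (\<lambda>i. if i \<in> A then b i / L else 0) L"
proof -
  define \<rho> where "\<rho> i = (if i \<in> A then b i / L else 0)" for i
  have ratio: "0 < \<rho> i" "b i / \<rho> i = L" if "i \<in> A" for i
    using assms(3) that bspec[OF assms(2) that] by (simp_all add: \<rho>_def)
  have covered_iff: "covered_at n x b \<rho> t \<longleftrightarrow> t \<le> L" for t
  proof
    assume "covered_at n x b \<rho> t"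
    moreover have "(0::real) \<in> {0..1}" by simp
    ultimately obtain i where "0 < \<rho> i" "t \<le> b i / \<rho> i"
      unfolding covered_at_iff by blast
    moreover from \<open>0 < \<rho> i\<close> have "i \<in> A" by (simp add: \<rho>_def split: if_splits)
    ultimately show "t \<le> L" using ratio by simp
  next
    assume "t \<le> L"
    show "covered_at n x b \<rho> t"
      unfolding covered_at_iff
    proof
      fix p :: real assume "p \<in> {0..1}"
      then obtain i where "i \<in> A" "\<bar>p - x i\<bar> \<le> b i / L" using cover by blast
      then have "\<bar>p - x i\<bar> \<le> \<rho> i" by (simp add: \<rho>_def)
      with \<open>i \<in> A\<close> show "\<exists>i\<in>{1..n}. 0 < \<rho> i \<and> t \<le> b i / \<rho> i \<and> \<bar>p - x i\<bar> \<le> \<rho> i"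
        using ratio[OF \<open>i \<in> A\<close>] \<open>t \<le> L\<close> assms(1) by force
    qed
  qed
  have "survives n x b \<rho> T \<longleftrightarrow> T \<le> L" for T
  proof
    assume "survives n x b \<rho> T"
    then show "T \<le> L"
      using \<open>0 < L\<close> by (cases "0 \<le> T") (auto simp: survives_def covered_iff)
  qed (auto simp: survives_def covered_iff)
  then show ?thesis by (simp add: is_lifetime_def \<rho>_def[abs_def])
qed

lemma exists_gt_divide_uniformly_close:
  fixes b :: "'i \<Rightarrow> real"
  assumes "finite A" and b: "\<forall>i\<in>A. 0 \<le> b i" and "0 < T" and "0 < e"
  shows "\<exists>L>T. \<forall>i\<in>A. b i / T - e \<le> b i / L"
proof -
  define B where "B = 1 + sum b A"
  have battery_le_B: "b i \<le> B" if "i \<in> A" for i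
  proof -
    have "b i \<le> sum b A"
      using that b \<open>finite A\<close> by (intro member_le_sum) auto
    then show ?thesis by (simp add: B_def)
  qed
  have "1 \<le> B"
    using b by (simp add: B_def sum_nonneg)
  define m where "m = min (e / B) (1 / T)"
  have "0 < m" "m \<le> e / B" "m \<le> 1 / T"
    using \<open>0 < e\<close> \<open>0 < T\<close> \<open>1 \<le> B\<close> by (simp_all add: m_def)
  define \<delta> where "\<delta> = m / 2"
  have "0 < \<delta>" "\<delta> < 1 / T"
    using \<open>0 < m\<close> \<open>m \<le> 1 / T\<close> unfolding \<delta>_def by linarith+
  have "\<delta> \<le> e / B / 2"
    using \<open>m \<le> e / B\<close> unfolding \<delta>_def by (rule divide_right_mono) simp
  define L where "L = 1 / (1 / T - \<delta>)"
  have "T * (1 / T - \<delta>) < 1"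
    using \<open>0 < T\<close> \<open>0 < \<delta>\<close> by (simp add: right_diff_distrib)
  then have "T < L"
    using \<open>\<delta> < 1 / T\<close> unfolding L_def by (simp add: pos_less_divide_eq)
  moreover have "b i / T - e \<le> b i / L" if "i \<in> A" for i
  proof -
    have "b i * \<delta> \<le> B * (e / B / 2)"
      using battery_le_B[OF that] b that \<open>\<delta> \<le> e / B / 2\<close> \<open>0 < \<delta>\<close> \<open>1 \<le> B\<close>
      by (intro mult_mono) simp_all
    also have "\<dots> \<le> e" using \<open>1 \<le> B\<close> \<open>0 < e\<close> by simp
    finally show ?thesis by (simp add: L_def right_diff_distrib)
  qed
  ultimately show ?thesis by blast
qed

lemma longer_lifetime_of_open_cover:
  assumes A: "A \<subseteq> {1..n}" and b: "\<forall>i\<in>A. 0 < b i" and "0 < T"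
    and cover: "\<forall>p\<in>{0..1}. \<exists>i\<in>A. \<bar>p - x i\<bar> < b i / T"
  obtains \<rho> L where "radial_assignment n \<rho>" "is_lifetime n x b \<rho> L" "T < L"
proof -
  obtain e where "0 < e" and margin: "\<forall>p\<in>{0..1}. \<exists>i\<in>A. \<bar>p - x i\<bar> \<le> b i / T - e"
    using open_interval_cover_margin[OF compact_Icc cover] by blast
  obtain L where "T < L" and shrink: "\<forall>i\<in>A. b i / T - e \<le> b i / L"
    using exists_gt_divide_uniformly_close[OF finite_subset[OF A finite_atLeastAtMost] _ \<open>0 < T\<close> \<open>0 < e\<close>] b
    by (meson less_imp_le)
  have cover_L: "\<forall>p\<in>{0..1}. \<exists>i\<in>A. \<bar>p - x i\<bar> \<le> b i / L"
  proof
    fix p :: real assume "p \<in> {0..1}"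
    then obtain i where "i \<in> A" "\<bar>p - x i\<bar> \<le> b i / T - e" using margin by blast
    with shrink show "\<exists>i\<in>A. \<bar>p - x i\<bar> \<le> b i / L" by force
  qed
  have "0 < L" using \<open>0 < T\<close> \<open>T < L\<close> by simp
  show ?thesis
  proof (rule that)
    show "radial_assignment n (\<lambda>i. if i \<in> A then b i / L else 0)"
      using b \<open>0 < L\<close> by (simp add: radial_assignment_def less_imp_le)
    show "is_lifetime n x b (\<lambda>i. if i \<in> A then b i / L else 0) L"
      by (rule uniform_assignment_is_lifetime[OF A b \<open>0 < L\<close> cover_L])
  qed (fact \<open>T < L\<close>)
qed

definition critical_pair :: "nat \<Rightarrow> (nat \<Rightarrow> real) \<Rightarrow> (nat \<Rightarrow> real) \<Rightarrow> real \<Rightarrow> nat \<Rightarrow> nat \<Rightarrow> bool" where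
  "critical_pair n x b T i k \<longleftrightarrow> i < k \<and> k \<le> n + 1 \<and> ext_loc n x i < ext_loc n x k \<and>
     T = (ext_bat n b k + ext_bat n b i) / (ext_loc n x k - ext_loc n x i)"

lemma ext_loc_mono:
  assumes "srsc_instance n x b" and "i \<le> j" and "j \<le> n + 1"
  shows "ext_loc n x i \<le> ext_loc n x j"
  using assms by (auto simp: srsc_instance_def ext_loc_def)

lemma touching_intervals_critical_pair:
  assumes inst: "srsc_instance n x b" and "0 < T" and "i \<le> n + 1" and "k \<le> n + 1"
    and "0 < ext_bat n b i + ext_bat n b k"
    and touch: "ext_loc n x i + ext_bat n b i / T = ext_loc n x k - ext_bat n b k / T"
  shows "critical_pair n x b T i k"
proof -
  have gap: "ext_loc n x k - ext_loc n x i = (ext_bat n b k + ext_bat n b i) / T"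
    using touch by (simp add: add_divide_distrib)
  moreover have "0 < (ext_bat n b k + ext_bat n b i) / T"
    using assms(2,5) by (simp add: add.commute)
  ultimately have "ext_loc n x i < ext_loc n x k" by linarith
  moreover have "i < k"
    using ext_loc_mono[OF inst _ \<open>i \<le> n + 1\<close>, of k] calculation by force
  ultimately show ?thesis
    using gap \<open>0 < T\<close> \<open>k \<le> n + 1\<close> by (simp add: critical_pair_def field_simps)
qed

lemma open_cover_unless_critical_pair:
  assumes inst: "srsc_instance n x b" and "0 < T"
    and A: "A \<subseteq> {1..n}" "\<forall>i\<in>A. 0 < b i"
    and cover: "\<forall>p\<in>{0..1}. \<exists>i\<in>A. \<bar>p - x i\<bar> \<le> b i / T"
    and no_critical: "\<nexists>i k. critical_pair n x b T i k"
  shows "\<forall>p\<in>{0..1}. \<exists>i\<in>A. \<bar>p - x i\<bar> < b i / T"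
proof -
  have no_touching: "ext_loc n x i + ext_bat n b i / T \<noteq> ext_loc n x k - ext_bat n b k / T"
    if "i \<le> n + 1" "k \<le> n + 1" "0 < ext_bat n b i + ext_bat n b k" for i k
    using touching_intervals_critical_pair[OF inst \<open>0 < T\<close> that] no_critical by blast
  have ext: "ext_loc n x i = x i" "ext_bat n b i = b i" "i \<le> n + 1" "0 < b i" if "i \<in> A" for i
    using A that by (auto simp: ext_loc_def ext_bat_def)
  have dummies: "ext_loc n x 0 = 0" "ext_bat n b 0 = 0"
    "ext_loc n x (n + 1) = 1" "ext_bat n b (n + 1) = 0"
    by (simp_all add: ext_loc_def ext_bat_def)
  show ?thesis
  proof (rule ballI, rule closed_interval_cover_interior[OF finite_subset[OF A(1) finite_atLeastAtMost] cover])
    show "\<forall>i\<in>A. x i + b i / T \<noteq> 1"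
    proof
      fix i assume "i \<in> A"
      from no_touching[of i "n + 1"] ext[OF this] dummies show "x i + b i / T \<noteq> 1" by simp
    qed
    show "\<forall>i\<in>A. x i - b i / T \<noteq> 0"
    proof
      fix i assume "i \<in> A"
      from no_touching[of 0 i] ext[OF this] dummies show "x i - b i / T \<noteq> 0" by simp
    qed
    show "\<forall>i\<in>A. \<forall>k\<in>A. x i + b i / T \<noteq> x k - b k / T"
    proof (intro ballI)
      fix i k assume "i \<in> A" "k \<in> A"
      from no_touching[of i k] ext[OF \<open>i \<in> A\<close>] ext[OF \<open>k \<in> A\<close>]
      show "x i + b i / T \<noteq> x k - b k / T" by simp
    qed
  qed
qed

theorem lemma11:
  fixes n :: nat and x b :: "nat \<Rightarrow> real" and T :: real
  assumes "srsc_instance n x b"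
    and "is_optimal_lifetime n x b T"
  shows "\<exists>i k. i < k \<and> k \<le> n + 1 \<and> ext_loc n x i < ext_loc n x k \<and>
           T = (ext_bat n b k + ext_bat n b i) / (ext_loc n x k - ext_loc n x i)"
proof -
  obtain \<rho> where lifetime: "is_lifetime n x b \<rho> T"
    using assms(2) by (auto simp: is_optimal_lifetime_def)
  consider "T = 0" | "0 < T"
    using is_lifetime_nonneg[OF lifetime] by fastforce
  then have "\<exists>i k. critical_pair n x b T i k"
  proof cases
    case 1
    then have "critical_pair n x b T 0 (n + 1)"
      by (simp add: critical_pair_def ext_loc_def ext_bat_def)
    then show ?thesis by blast
  next
    case 2
    obtain A where A: "A \<subseteq> {1..n}" "\<forall>i\<in>A. 0 < b i"
      and cover: "\<forall>p\<in>{0..1}. \<exists>i\<in>A. \<bar>p - x i\<bar> \<le> b i / T"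
      using is_lifetime_covered_with_battery_radii[OF lifetime 2] by blast
    show ?thesis
    proof (rule ccontr)
      assume "\<nexists>i k. critical_pair n x b T i k"
      with open_cover_unless_critical_pair[OF assms(1) 2 A cover]
      obtain \<rho>' L where "radial_assignment n \<rho>'" "is_lifetime n x b \<rho>' L" "T < L"
        using longer_lifetime_of_open_cover[OF A 2] by blast
      with assms(2) show False unfolding is_optimal_lifetime_def by force
    qed
  qed
  then show ?thesis unfolding critical_pair_def .
qed

end
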